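(* Let $n,d\ge1$. For $k\ge1$ let $\mathbf M_k\in\mathbb R^{n\times n}$ be invertible; for $k\ge0$ let $\mathbf H_k\in\mathbb R^{d\times n}$, $\mathbf R_k$ symmetric positive definite, ${\boldsymbol\Omega}_k=\mathbf H_k^{\mathrm T}\mathbf R_k^{-1}\mathbf H_k$. Let $\mathbf M_{k:0}=\mathbf M_k\cdots\mathbf M_1$, let $\mathbf P_0$ be symmetric positive semi-definite with largest eigenvalue $\sigma_1^0$, and $\mathbf P_{k+1}=\mathbf M_{k+1}(\mathbf I_n+\mathbf P_k{\boldsymbol\Omega}_k)^{-1}\mathbf P_k\mathbf M_{k+1}^{\mathrm T}$ for $k\ge0$. For $k\ge1$ let $\mathbf M_{k:0}=\mathbf U_{k:0}{\boldsymbol\Sigma}_{k:0}\mathbf V_{k:0}^{\mathrm T}$ be a singular value decomposition with $\mathbf U_{k:0}=[{\mathbf u}_1^{k:0},\ldots,{\mathbf u}_n^{k:0}]$, $\mathbf V_{k:0}=[{\mathbf v}_1^{k:0},\ldots,{\mathbf v}_n^{k:0}]$ orthogonal and $[{\boldsymbol\Sigma}_{k:0}]_{ii}=\exp(\lambda_i^k k)$ with $\lambda_1^k\ge\cdots\ge\lambda_n^k$. For $1\le s\le n$ let $\mathbf V^s_{k:0}=[{\mathbf v}^{k:0}_{n-s+1},\ldots,{\mathbf v}^{k:0}_n]$, let ${\mathcal S}^s_{k:0}=\mathrm{span}\{{\mathbf u}^{k:0}_{n-s+1},\ldots,{\mathbf u}^{k:0}_n\}$, and $$\alpha_s=\sup_{k\ge1}\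 \max_{{\mathbf h}\in\mathrm{Im}(\mathbf V^s_{k:0}),\ \|{\mathbf h}\|=1}{\mathbf h}^{\mathrm T}\mathbf P_0{\mathbf h}.$$ Then $\alpha_s\le\sigma_1^0$ for all $s$, and for every $k\ge1$, every $1\le s\le n$ and every unit vector ${\mathbf h}\in{\mathcal S}^s_{k:0}$, $${\mathbf h}^{\mathrm T}\mathbf P_k{\mathbf h}\le\alpha_s\exp\big(2\lambda^k_{n-s+1}k\big).$$ Consequently, if $\sigma_1^k\ge\cdots\ge\sigma_n^k$ are the eigenvalues of $\mathbf P_k$, then $\sigma_i^k\le\alpha_{n-i+1}\exp(2\lambda_i^k k)\le\sigma_1^0\exp(2\lambda_i^kk)$ for $i=1,\ldots,n$. Moreover, suppose that for each $i$ the limit $\lambda_i=\lim_{k\to\infty}\lambda_i^k$ exists and that $\lambda_1>\cdots>\lambda_n$. Then for every $i$ with $\lambda_i<0$, $({\mathbf u}^{k:0}_i)^{\mathrm T}\mathbf P_k{\mathbf u}^{k:0}_i\to0$ as $k\to\infty$; and if in addition the sequence $\{\mathbf P_k\}$ is uniformly bounded, then $\|\mathbf P_k{\mathbf u}^{k:0}_i\|\to0$ as $k\to\infty$ for every such $i$.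
   Context: $\|\cdot\|$ is the Euclidean norm. The $\lambda_i$ are the Lyapunov exponents of the dynamics $\mathbf M_{k:0}$; the left singular vectors ${\mathbf u}_i^{k:0}$ approximate the backward Lyapunov vectors at time $t_k$. *)

theory Defs
  imports "HOL-Analysis.Analysis" "HOL-Computational_Algebra.Polynomial"
begin

fun Mprod :: "(nat \<Rightarrow> real^'n^'n) \<Rightarrow> nat \<Rightarrow> real^'n^'n" where
  "Mprod M 0 = mat 1"
| "Mprod M (Suc k) = M (Suc k) ** Mprod M k"

definition outer :: "real^'n \<Rightarrow> real^'m \<Rightarrow> real^'m^'n" where
  "outer x y = (\<chi> i j. x $ i * y $ j)"

definition symmetric_mat :: "real^'n^'n \<Rightarrow> bool" where
  "symmetric_mat A \<longleftrightarrow> transpose A = A"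

definition pos_def :: "real^'n^'n \<Rightarrow> bool" where
  "pos_def A \<longleftrightarrow> symmetric_mat A \<and> (\<forall>x. x \<noteq> 0 \<longrightarrow> x \<bullet> (A *v x) > 0)"

definition pos_semidef :: "real^'n^'n \<Rightarrow> bool" where
  "pos_semidef A \<longleftrightarrow> symmetric_mat A \<and> (\<forall>x. x \<bullet> (A *v x) \<ge> 0)"

definition is_eigenvalue :: "real^'n^'n \<Rightarrow> real \<Rightarrow> bool" where
  "is_eigenvalue A c \<longleftrightarrow> (\<exists>v. v \<noteq> 0 \<and> A *v v = c *\<^sub>R v)"

definition largest_eigenvalue :: "real^'n^'n \<Rightarrow> real" where
  "largest_eigenvalue A = Max {c. is_eigenvalue A c}"

definition charpoly :: "real^'n^'n \<Rightarrow> real poly" where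
  "charpoly A = det (\<chi> i j. (if i = j then [:0, 1:] else 0) - [:A $ i $ j:])"

definition orthonormal_fam :: "nat \<Rightarrow> (nat \<Rightarrow> real^'n) \<Rightarrow> bool" where
  "orthonormal_fam n w \<longleftrightarrow>
     (\<forall>i\<in>{1..n}. \<forall>j\<in>{1..n}. w i \<bullet> w j = (if i = j then 1 else 0))"

end

theory Submission
  imports Defs
begin

text \<open>The update \<open>P \<mapsto> (I + P \<Omega>)\<^sup>-\<^sup>1 P\<close> keeps \<open>P\<close> positive semi-definite and does not
  increase it in the Loewner order, so by induction \<open>h\<^sup>T P\<^sub>k h\<close> is at most the quadratic form of
  \<open>P\<^sub>0\<close> at \<open>M\<^sub>k\<^sub>:\<^sub>0\<^sup>T h\<close>. By the singular value decomposition, \<open>M\<^sub>k\<^sub>:\<^sub>0\<^sup>T\<close> maps the span of the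
  last \<open>s\<close> left singular vectors into the span of the last \<open>s\<close> right singular vectors,
  stretching by at most \<open>exp (\<lambda>\<^sup>k\<^sub>n\<^sub>-\<^sub>s\<^sub>+\<^sub>1 k)\<close>, and on the latter span \<open>P\<^sub>0\<close> is bounded by \<open>\<alpha>\<^sub>s\<close>.
  The eigenvalue bounds follow by the Courant--Fischer principle applied to the span of
  \<open>u\<^sub>i, \<dots>, u\<^sub>n\<close>, the limits from \<open>exp (2 \<lambda>\<^sup>k\<^sub>i k) \<longrightarrow> 0\<close> when \<open>\<lambda>\<^sub>i < 0\<close> together with
  \<open>\<parallel>P u\<parallel>\<^sup>2 \<le> C u\<^sup>T P u\<close> for positive semi-definite \<open>P\<close> of norm bounded in terms of \<open>C\<close>.\<close>

section \<open>Quadratic forms of matrices\<close>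

lemma inner_matrix_vector_transpose: "x \<bullet> (A *v y) = (transpose A *v x) \<bullet> (y::real^'n)"
  by (metis dot_lmul_matrix transpose_matrix_vector)

lemma symmetric_mat_inner_commute:
  "symmetric_mat A \<Longrightarrow> x \<bullet> (A *v y) = y \<bullet> (A *v (x::real^'n))"
  unfolding symmetric_mat_def by (metis inner_commute inner_matrix_vector_transpose)

lemma symmetric_mat_quadratic_form_add_scaleR:
  assumes "symmetric_mat A"
  shows "(x + t *\<^sub>R y) \<bullet> (A *v (x + t *\<^sub>R y)) =
     x \<bullet> (A *v x) + 2 * (y \<bullet> (A *v x)) * t + (y \<bullet> (A *v y)) * t\<^sup>2"
  using symmetric_mat_inner_commute[OF assms, of x y]
  by (simp add: matrix_vector_right_distrib matrix_vector_mult_scaleR inner_add_left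
      inner_add_right power2_eq_square algebra_simps)

lemma nonneg_quadratic_discriminant:
  fixes a b c :: real
  assumes nonneg: "\<And>t. 0 \<le> a + 2 * b * t + c * t\<^sup>2"
  shows "b\<^sup>2 \<le> a * c"
proof (cases "c = 0")
  case True
  have "b = 0"
  proof (rule ccontr)
    assume "b \<noteq> 0"
    with True nonneg[of "- (a + 1) / (2 * b)"] show False by (simp add: field_simps)
  qed
  with True nonneg[of 0] show ?thesis by simp
next
  case False
  have "c \<ge> 0"
  proof (rule ccontr)
    assume "\<not> c \<ge> 0"
    define t where "t = sqrt ((a + 1) / - c)"
    have "t\<^sup>2 = (a + 1) / - c"
      unfolding t_def using nonneg[of 0] \<open>\<not> c \<ge> 0\<close> by (simp add: divide_nonneg_neg)
    moreover have "0 \<le> 2 * a + 2 * c * t\<^sup>2"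
      using nonneg[of t] nonneg[of "- t"] by simp
    ultimately show False using \<open>\<not> c \<ge> 0\<close> by (simp add: field_simps)
  qed
  with False have "c > 0" by simp
  with nonneg[of "- b / c"] show ?thesis by (simp add: field_simps power2_eq_square)
qed

lemma symmetric_mat_Cauchy_Schwarz:
  assumes "symmetric_mat A" and "\<And>t. 0 \<le> (x + t *\<^sub>R y) \<bullet> (A *v (x + t *\<^sub>R y))"
  shows "(y \<bullet> (A *v x))\<^sup>2 \<le> (x \<bullet> (A *v x)) * (y \<bullet> (A *v (y::real^'n)))"
  using assms(2) unfolding symmetric_mat_quadratic_form_add_scaleR[OF assms(1)]
  by (rule nonneg_quadratic_discriminant)

lemma pos_semidef_Cauchy_Schwarz:
  assumes "pos_semidef A"
  shows "(y \<bullet> (A *v x))\<^sup>2 \<le> (x \<bullet> (A *v x)) * (y \<bullet> (A *v (y::real^'n)))"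
  using assms unfolding pos_semidef_def by (intro symmetric_mat_Cauchy_Schwarz) auto

lemma pos_semidef_quadratic_form_eq_0:
  assumes "pos_semidef A" and "x \<bullet> (A *v x) = 0"
  shows "A *v x = (0::real^'n)"
proof -
  have "((A *v x) \<bullet> (A *v x))\<^sup>2 \<le> (x \<bullet> (A *v x)) * ((A *v x) \<bullet> (A *v (A *v x)))"
    by (rule pos_semidef_Cauchy_Schwarz[OF assms(1)])
  with assms(2) show ?thesis by simp
qed

lemma norm_matrix_vector_mult_le:
  fixes A :: "real^'n^'m"
  shows "norm (A *v x) \<le> real CARD('m) * real CARD('n) * norm A * norm x"
proof -
  have "\<bar>A $ i $ j\<bar> \<le> norm A" for i j
    using Finite_Cartesian_Product.norm_nth_le[of "A $ i" j]
      Finite_Cartesian_Product.norm_nth_le[of A i] by simp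
  then have "onorm ((*v) A) \<le> real CARD('m) * real CARD('n) * norm A"
    by (rule onorm_le_matrix_component)
  moreover have "norm (A *v x) \<le> onorm ((*v) A) * norm x"
    by (rule onorm[OF matrix_vector_mul_bounded_linear])
  ultimately show ?thesis by (meson mult_right_mono norm_ge_zero order_trans)
qed

lemma pos_semidef_norm_mult_le:
  fixes A :: "real^'n^'n"
  assumes psd: "pos_semidef A" and bound: "\<And>x. norm (A *v x) \<le> C * norm x"
  shows "(norm (A *v u))\<^sup>2 \<le> C * (u \<bullet> (A *v u))"
proof (cases "A *v u = 0")
  case True
  then show ?thesis by simp
next
  case False
  let ?y = "A *v u"
  have "((norm ?y)\<^sup>2)\<^sup>2 = (?y \<bullet> (A *v u))\<^sup>2" by (simp add: power2_norm_eq_inner)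
  also have "\<dots> \<le> (u \<bullet> (A *v u)) * (?y \<bullet> (A *v ?y))"
    by (rule pos_semidef_Cauchy_Schwarz[OF psd])
  also have "\<dots> \<le> (u \<bullet> (A *v u)) * (C * (norm ?y)\<^sup>2)"
  proof (rule mult_left_mono)
    have "?y \<bullet> (A *v ?y) \<le> norm ?y * norm (A *v ?y)" by (rule norm_cauchy_schwarz)
    also have "\<dots> \<le> norm ?y * (C * norm ?y)" by (simp add: bound mult_left_mono)
    finally show "?y \<bullet> (A *v ?y) \<le> C * (norm ?y)\<^sup>2" by (simp add: power2_eq_square mult_ac)
    show "0 \<le> u \<bullet> (A *v u)" using psd unfolding pos_semidef_def by simp
  qed
  finally show ?thesis using False by (simp add: power2_eq_square mult_ac)
qed

section \<open>The covariance recursion\<close>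

lemma invertible_matrix_inv:
  fixes A :: "real^'n^'n"
  assumes "invertible A"
  shows "A ** matrix_inv A = mat 1" and "matrix_inv A ** A = mat 1"
  using someI_ex[OF assms[unfolded invertible_def]] unfolding matrix_inv_def by auto

lemma invertible_iff_ker_eq_0:
  fixes A :: "real^'n^'n"
  shows "invertible A \<longleftrightarrow> (\<forall>x. A *v x = 0 \<longrightarrow> x = 0)"
  by (simp add: invertible_left_inverse matrix_left_invertible_ker)

lemma transpose_add: "transpose (A + B) = transpose A + transpose (B::real^'n^'m)"
  by (simp add: transpose_def vec_eq_iff)

lemma matrix_add_rdistrib: "(B + C) ** A = B ** A + C ** (A::real^'p^'n)"
  by (vector matrix_matrix_mult_def sum.distrib[symmetric] field_simps)

lemma pos_semidef_matrix_inv: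
  fixes R :: "real^'n^'n"
  assumes R: "pos_def R"
  shows "pos_semidef (matrix_inv R)"
proof -
  have "invertible R"
    unfolding invertible_iff_ker_eq_0 using R unfolding pos_def_def by force
  then have R_Ri: "R ** matrix_inv R = mat 1"
    using invertible_matrix_inv by blast
  have "transpose (matrix_inv R) ** R = mat 1"
    using R R_Ri unfolding pos_def_def symmetric_mat_def
    by (metis matrix_transpose_mul transpose_mat)
  then have sym: "transpose (matrix_inv R) = matrix_inv R"
    by (metis R_Ri matrix_mul_assoc matrix_mul_lid matrix_mul_rid)
  have "x \<bullet> (matrix_inv R *v x) \<ge> 0" for x
  proof -
    define y where "y = matrix_inv R *v x"
    have "x = R *v y"
      unfolding y_def using R_Ri by (metis matrix_vector_mul_assoc matrix_vector_mul_lid)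
    then have "x \<bullet> (matrix_inv R *v x) = y \<bullet> (R *v y)" by (simp add: y_def inner_commute)
    also have "\<dots> \<ge> 0" using R unfolding pos_def_def by (cases "y = 0") (auto intro: less_imp_le)
    finally show ?thesis .
  qed
  with sym show ?thesis unfolding pos_semidef_def symmetric_mat_def by blast
qed

lemma pos_semidef_congruence:
  fixes A :: "real^'m^'m" and B :: "real^'m^'n"
  assumes "pos_semidef A"
  shows "pos_semidef (B ** A ** transpose B)"
proof -
  have "x \<bullet> ((B ** A ** transpose B) *v x) = (transpose B *v x) \<bullet> (A *v (transpose B *v x))" for x
    by (metis inner_matrix_vector_transpose matrix_vector_mul_assoc)
  with assms show ?thesis
    unfolding pos_semidef_def symmetric_mat_def by (simp add: matrix_transpose_mul matrix_mul_assoc)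
qed

lemma pos_semidef_add:
  fixes A B :: "real^'n^'n"
  assumes "pos_semidef A" and "pos_semidef B"
  shows "pos_semidef (A + B)"
  using assms unfolding pos_semidef_def symmetric_mat_def
  by (simp add: transpose_add matrix_vector_mult_add_rdistrib inner_add_right add_nonneg_nonneg)

lemma pos_semidef_information_matrix:
  fixes R :: "real^'d^'d" and H :: "real^'n^'d"
  assumes "pos_def R"
  shows "pos_semidef (transpose H ** matrix_inv R ** H)"
  using pos_semidef_congruence[OF pos_semidef_matrix_inv[OF assms], of "transpose H"] by simp

lemma invertible_mat_1_add_pos_semidef_mult:
  fixes P W :: "real^'n^'n"
  assumes P: "pos_semidef P" and W: "pos_semidef W"
  shows "invertible (mat 1 + P ** W)"
  unfolding invertible_iff_ker_eq_0
proof (intro allI impI)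
  fix z assume "(mat 1 + P ** W) *v z = 0"
  then have z: "z = - (P *v (W *v z))"
    by (simp add: matrix_vector_mul_assoc[symmetric] matrix_vector_mult_add_rdistrib
        eq_neg_iff_add_eq_0)
  then have "z \<bullet> (W *v z) = - ((W *v z) \<bullet> (P *v (W *v z)))"
    by (metis inner_commute inner_minus_left)
  moreover have "(W *v z) \<bullet> (P *v (W *v z)) \<ge> 0" and "z \<bullet> (W *v z) \<ge> 0"
    using P W unfolding pos_semidef_def by auto
  ultimately have "W *v z = 0"
    using pos_semidef_quadratic_form_eq_0[OF W] by simp
  with z show "z = 0" by simp
qed

text \<open>With \<open>N = I + P W\<close> and \<open>X = N\<^sup>-\<^sup>1 P\<close> one has \<open>N P = P N\<^sup>T\<close>, hence
  \<open>X = N\<^sup>-\<^sup>1 (P + P W P) N\<^sup>-\<^sup>T\<close> and \<open>P - X = X W X + (X W) P (X W)\<^sup>T\<close>: both are congruences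
  of positive semi-definite matrices.\<close>

lemma Kalman_update_pos_semidef:
  fixes P W :: "real^'n^'n"
  assumes P: "pos_semidef P" and W: "pos_semidef W"
  defines "X \<equiv> matrix_inv (mat 1 + P ** W) ** P"
  shows "pos_semidef X" and "pos_semidef (P - X)"
proof -
  define N where "N = mat 1 + P ** W"
  define Ni where "Ni = matrix_inv N"
  have PT: "transpose P = P" and WT: "transpose W = W"
    using P W unfolding pos_semidef_def symmetric_mat_def by auto
  have N_Ni: "N ** Ni = mat 1" and Ni_N: "Ni ** N = mat 1"
    using invertible_matrix_inv[OF invertible_mat_1_add_pos_semidef_mult[OF P W]]
    unfolding N_def Ni_def by auto
  have NT: "transpose N = mat 1 + W ** P"
    unfolding N_def by (simp add: transpose_add matrix_transpose_mul PT WT)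
  have NP: "N ** P = P + P ** W ** P"
    unfolding N_def by (simp add: matrix_add_rdistrib matrix_mul_assoc)
  have PNT: "P ** transpose N = P + P ** W ** P"
    unfolding NT by (simp add: matrix_add_ldistrib matrix_mul_assoc)
  have X: "X = Ni ** P" unfolding X_def Ni_def N_def ..
  have X_cong: "X = Ni ** (P + P ** W ** P) ** transpose Ni"
    by (metis X NP PNT Ni_N matrix_mul_assoc matrix_mul_lid matrix_mul_rid matrix_transpose_mul
        transpose_mat)
  show X_psd: "pos_semidef X"
    unfolding X_cong
    by (intro pos_semidef_congruence pos_semidef_add P)
       (metis PT pos_semidef_congruence[OF W, of P] matrix_mul_assoc)
  have XT: "transpose X = X" using X_psd unfolding pos_semidef_def symmetric_mat_def by simp
  have NX: "N ** X = P" by (metis X N_Ni matrix_mul_assoc matrix_mul_lid)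
  have "X ** transpose N = P"
    by (metis NX XT PT matrix_transpose_mul)
  then have "X + X ** W ** P = P"
    by (simp add: NT matrix_add_ldistrib matrix_mul_assoc)
  then have "P - X = X ** W ** P"
    by (metis add_diff_cancel_left')
  also have "\<dots> = X ** W ** X + (X ** W) ** P ** (W ** X)"
    by (metis NX N_def matrix_add_ldistrib matrix_add_rdistrib matrix_mul_assoc matrix_mul_lid)
  also have "\<dots> = X ** W ** transpose X + (X ** W) ** P ** transpose (X ** W)"
    by (simp add: matrix_transpose_mul XT WT)
  finally show "pos_semidef (P - X)"
    by (simp add: pos_semidef_add pos_semidef_congruence P W)
qed

locale covariance_recursion =
  fixes M \<Omega> P :: "nat \<Rightarrow> real^'n^'n"
  assumes Omega_pos_semidef: "\<And>k. pos_semidef (\<Omega> k)"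
    and P0_pos_semidef: "pos_semidef (P 0)"
    and P_Suc: "\<And>k. P (Suc k) = M (Suc k) ** matrix_inv (mat 1 + P k ** \<Omega> k) ** P k
                                   ** transpose (M (Suc k))"
begin

lemma P_Suc_Kalman_update:
  "P (Suc k) = M (Suc k) ** (matrix_inv (mat 1 + P k ** \<Omega> k) ** P k) ** transpose (M (Suc k))"
  by (simp add: P_Suc matrix_mul_assoc)

lemma P_pos_semidef: "pos_semidef (P k)"
proof (induction k)
  case (Suc k)
  show ?case
    unfolding P_Suc_Kalman_update
    by (intro pos_semidef_congruence Kalman_update_pos_semidef(1) Suc Omega_pos_semidef)
qed (rule P0_pos_semidef)

lemma quadratic_form_P_le:
  "h \<bullet> (P k *v h) \<le> (transpose (Mprod M k) *v h) \<bullet> (P 0 *v (transpose (Mprod M k) *v h))"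
proof (induction k arbitrary: h)
  case 0
  show ?case by (simp del: transpose_matrix_vector)
next
  case (Suc k)
  define X where "X = matrix_inv (mat 1 + P k ** \<Omega> k) ** P k"
  let ?g = "transpose (M (Suc k)) *v h"
  have "h \<bullet> (P (Suc k) *v h) = ?g \<bullet> (X *v ?g)"
    unfolding P_Suc_Kalman_update X_def
    by (metis inner_matrix_vector_transpose matrix_vector_mul_assoc)
  also have "\<dots> \<le> ?g \<bullet> (P k *v ?g)"
    using Kalman_update_pos_semidef(2)[OF P_pos_semidef Omega_pos_semidef, of k]
    unfolding pos_semidef_def X_def by (simp add: matrix_vector_mult_diff_rdistrib inner_diff_right)
  also have "\<dots> \<le> (transpose (Mprod M k) *v ?g) \<bullet> (P 0 *v (transpose (Mprod M k) *v ?g))"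
    by (rule Suc.IH)
  also have "transpose (Mprod M k) *v ?g = transpose (Mprod M (Suc k)) *v h"
    by (simp only: Mprod.simps matrix_transpose_mul matrix_vector_mul_assoc)
  finally show ?case .
qed

end

section \<open>Orthonormal families\<close>

definition orthonormal_on :: "'i set \<Rightarrow> ('i \<Rightarrow> 'a::real_inner) \<Rightarrow> bool" where
  "orthonormal_on I e \<longleftrightarrow> (\<forall>i\<in>I. \<forall>j\<in>I. e i \<bullet> e j = (if i = j then 1 else 0))"

lemma orthonormal_fam_iff_orthonormal_on: "orthonormal_fam n w \<longleftrightarrow> orthonormal_on {1..n} w"
  unfolding orthonormal_fam_def orthonormal_on_def ..

lemma orthonormal_on_subset: "orthonormal_on J e \<Longrightarrow> I \<subseteq> J \<Longrightarrow> orthonormal_on I e"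
  unfolding orthonormal_on_def by blast

lemma orthonormal_on_norm: "orthonormal_on I e \<Longrightarrow> i \<in> I \<Longrightarrow> norm (e i) = 1"
  unfolding orthonormal_on_def by (simp add: norm_eq_1)

lemma orthonormal_on_orthogonal:
  "orthonormal_on I e \<Longrightarrow> i \<in> I \<Longrightarrow> j \<in> I \<Longrightarrow> i \<noteq> j \<Longrightarrow> orthogonal (e i) (e j)"
  unfolding orthonormal_on_def orthogonal_def by simp

lemma orthonormal_on_inj: "orthonormal_on I e \<Longrightarrow> inj_on e I"
proof (rule inj_onI, rule ccontr)
  fix i j assume on: "orthonormal_on I e" and ij: "i \<in> I" "j \<in> I" "i \<noteq> j" and eq: "e i = e j"
  from on ij have "e i \<bullet> e j = 0" and "e j \<bullet> e j = 1" unfolding orthonormal_on_def by auto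
  with eq show False by simp
qed

lemma orthonormal_on_pairwise_orthogonal: "orthonormal_on I e \<Longrightarrow> pairwise orthogonal (e ` I)"
  unfolding pairwise_def by (auto intro: orthonormal_on_orthogonal)

lemma orthonormal_on_independent:
  fixes e :: "'i \<Rightarrow> 'a::euclidean_space"
  assumes "orthonormal_on I e"
  shows "independent (e ` I)"
proof (rule pairwise_orthogonal_independent)
  show "pairwise orthogonal (e ` I)" using assms by (rule orthonormal_on_pairwise_orthogonal)
  show "0 \<notin> e ` I" using orthonormal_on_norm[OF assms] by force
qed

lemma dim_span_orthonormal_on:
  fixes e :: "'i \<Rightarrow> 'a::euclidean_space"
  assumes "orthonormal_on I e" and "finite I"
  shows "dim (span (e ` I)) = card I"
  using dim_span_eq_card_independent[OF orthonormal_on_independent[OF assms(1)]]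
  by (simp add: card_image orthonormal_on_inj[OF assms(1)])

lemma orthonormal_on_expansion:
  fixes e :: "'i \<Rightarrow> 'a::euclidean_space"
  assumes "orthonormal_on I e" and "finite I" and "x \<in> span (e ` I)"
  shows "(\<Sum>j\<in>I. (x \<bullet> e j) *\<^sub>R e j) = x"
proof -
  have "(\<Sum>b\<in>e ` I. (x \<bullet> b) *\<^sub>R b) = x"
    using assms by (intro orthonormal_basis_expand orthonormal_on_pairwise_orthogonal)
       (auto simp: orthonormal_on_norm)
  then show ?thesis by (simp add: sum.reindex orthonormal_on_inj[OF assms(1)])
qed

lemma inner_sum_orthonormal_on:
  assumes "orthonormal_on I e" and "finite I" and "i \<in> I"
  shows "(\<Sum>j\<in>I. c j *\<^sub>R e j) \<bullet> e i = c i"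
proof -
  have "(\<Sum>j\<in>I. c j *\<^sub>R e j) \<bullet> e i = (\<Sum>j\<in>I. c j * (if j = i then 1 else 0))"
    using assms unfolding orthonormal_on_def by (simp add: inner_sum_left)
  then show ?thesis using assms by (simp add: if_distrib cong: if_cong)
qed

lemma norm_sum_orthonormal_on:
  assumes "orthonormal_on I e" and "finite I"
  shows "(norm (\<Sum>j\<in>I. c j *\<^sub>R e j))\<^sup>2 = (\<Sum>j\<in>I. (c j)\<^sup>2)"
proof -
  have "(norm (\<Sum>j\<in>I. c j *\<^sub>R e j))\<^sup>2 = (\<Sum>i\<in>I. c i * ((\<Sum>j\<in>I. c j *\<^sub>R e j) \<bullet> e i))"
    by (simp add: power2_norm_eq_inner inner_sum_right)
  then show ?thesis by (simp add: inner_sum_orthonormal_on[OF assms] power2_eq_square)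
qed

lemma norm_span_orthonormal_on:
  fixes e :: "'i \<Rightarrow> 'a::euclidean_space"
  assumes "orthonormal_on I e" and "finite I" and "x \<in> span (e ` I)"
  shows "(norm x)\<^sup>2 = (\<Sum>j\<in>I. (x \<bullet> e j)\<^sup>2)"
proof -
  have "(norm x)\<^sup>2 = (norm (\<Sum>j\<in>I. (x \<bullet> e j) *\<^sub>R e j))\<^sup>2"
    by (simp only: orthonormal_on_expansion[OF assms])
  also have "\<dots> = (\<Sum>j\<in>I. (x \<bullet> e j)\<^sup>2)" by (rule norm_sum_orthonormal_on[OF assms(1,2)])
  finally show ?thesis .
qed

lemma inner_span_orthonormal_on_outside:
  assumes "orthonormal_on J e" and "I \<subseteq> J" and "x \<in> span (e ` I)" and "j \<in> J - I"
  shows "x \<bullet> e j = 0"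
proof -
  have "orthogonal (e j) x"
    using assms(3)
    by (rule orthogonal_to_span) (use assms in \<open>auto intro: orthonormal_on_orthogonal\<close>)
  then show ?thesis by (simp add: orthogonal_def inner_commute)
qed

lemma orthonormal_on_insert:
  assumes "orthonormal_on F e" and "a \<notin> F" and "norm h = 1"
    and "\<And>j. j \<in> F \<Longrightarrow> orthogonal (e j) h"
  shows "orthonormal_on (insert a F) (e(a := h))"
  using assms unfolding orthonormal_on_def orthogonal_def
  by (auto simp: inner_commute norm_eq_1)

section \<open>Spectral theory of symmetric matrices\<close>

lemma Rayleigh_quotient_attains_max:
  fixes A :: "real^'n^'n"
  assumes S: "subspace S" and x0: "x0 \<in> S" "x0 \<noteq> 0"
  shows "\<exists>h\<in>S. norm h = 1 \<and> (\<forall>x\<in>S. x \<bullet> (A *v x) \<le> (h \<bullet> (A *v h)) * (norm x)\<^sup>2)"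
proof -
  let ?K = "S \<inter> sphere 0 1" and ?f = "\<lambda>x. x \<bullet> (A *v x)"
  have unit_in_K: "x /\<^sub>R norm x \<in> ?K" if "x \<in> S" "x \<noteq> 0" for x
    using that S by (simp add: subspace_scale)
  have "compact ?K" by (intro closed_Int_compact closed_subspace compact_sphere S)
  moreover have "?K \<noteq> {}" using unit_in_K[OF x0] by blast
  moreover have "continuous_on ?K ?f"
    by (intro continuous_intros
        matrix_vector_mult_linear_continuous_on[unfolded linear_continuous_on])
  ultimately have "\<exists>h\<in>?K. \<forall>y\<in>?K. ?f y \<le> ?f h" by (rule continuous_attains_sup)
  then obtain h where h: "h \<in> ?K" and max: "\<And>y. y \<in> ?K \<Longrightarrow> ?f y \<le> ?f h" by blast
  have "?f x \<le> ?f h * (norm x)\<^sup>2" if "x \<in> S" for x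
  proof (cases "x = 0")
    case False
    have "?f x / (norm x)\<^sup>2 = ?f (x /\<^sub>R norm x)"
      by (simp add: matrix_vector_mult_scaleR power2_eq_square field_simps)
    also have "\<dots> \<le> ?f h" using max unit_in_K[OF that False] by blast
    finally show ?thesis using False by (simp add: field_simps)
  qed simp
  with h show ?thesis by auto
qed

text \<open>If \<open>h\<close> maximises the Rayleigh quotient on an invariant subspace \<open>S\<close>, then \<open>c I - A\<close> is
  positive semi-definite on \<open>S\<close> and vanishes at \<open>h\<close>; Cauchy--Schwarz makes \<open>(c I - A) h\<close>
  orthogonal to \<open>S\<close>, which contains it.\<close>

lemma symmetric_mat_Rayleigh_maximizer_eigenvector:
  fixes A :: "real^'n^'n"
  assumes symA: "symmetric_mat A" and S: "subspace S" and inv: "\<And>x. x \<in> S \<Longrightarrow> A *v x \<in> S"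
    and h: "h \<in> S" "norm h = 1"
    and max: "\<And>x. x \<in> S \<Longrightarrow> x \<bullet> (A *v x) \<le> (h \<bullet> (A *v h)) * (norm x)\<^sup>2"
  shows "A *v h = (h \<bullet> (A *v h)) *\<^sub>R h"
proof -
  define c where "c = h \<bullet> (A *v h)"
  define B where "B = c *\<^sub>R mat 1 - A"
  have Bv: "B *v x = c *\<^sub>R x - A *v x" for x
    by (simp add: B_def matrix_vector_mult_diff_rdistrib scaleR_matrix_vector_assoc[symmetric])
  have symB: "symmetric_mat B"
    using symA unfolding B_def symmetric_mat_def by (simp add: transpose_def mat_def vec_eq_iff)
  have Bh: "h \<bullet> (B *v h) = 0"
    using h(2) by (simp add: Bv c_def inner_diff_right norm_eq_1)
  have "y \<bullet> (B *v h) = 0" if "y \<in> S" for y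
  proof -
    have "0 \<le> x \<bullet> (B *v x)" if "x \<in> S" for x
      using max[OF that] by (simp add: Bv c_def inner_diff_right power2_norm_eq_inner)
    then have "0 \<le> (h + t *\<^sub>R y) \<bullet> (B *v (h + t *\<^sub>R y))" for t
      using S h \<open>y \<in> S\<close> by (simp add: subspace_add subspace_scale)
    from symmetric_mat_Cauchy_Schwarz[OF symB this] Bh show ?thesis by simp
  qed
  moreover have "B *v h \<in> S" using S inv h by (simp add: Bv subspace_diff subspace_scale)
  ultimately have "B *v h = 0" by (metis inner_eq_zero_iff)
  then show ?thesis unfolding Bv c_def by simp
qed

lemma symmetric_mat_eigenvector_in_invariant_subspace:
  fixes A :: "real^'n^'n"
  assumes "symmetric_mat A" and "subspace S" and "\<And>x. x \<in> S \<Longrightarrow> A *v x \<in> S"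
    and "x0 \<in> S" and "x0 \<noteq> 0"
  obtains h c where "h \<in> S" "norm h = 1" "A *v h = c *\<^sub>R h"
proof -
  obtain h where "h \<in> S" "norm h = 1"
    and "\<forall>x\<in>S. x \<bullet> (A *v x) \<le> (h \<bullet> (A *v h)) * (norm x)\<^sup>2"
    using Rayleigh_quotient_attains_max[OF assms(2,4,5)] by blast
  with symmetric_mat_Rayleigh_maximizer_eigenvector[OF assms(1-3)] that show thesis by blast
qed

text \<open>The spectral theorem. The orthogonal complement of finitely many eigenvectors is invariant,
  and it is non-trivial as long as there are fewer than \<open>CARD('n)\<close> of them.\<close>

lemma symmetric_mat_orthonormal_eigenvectors:
  fixes A :: "real^'n^'n" and F :: "'i set"
  assumes symA: "symmetric_mat A" and "finite F" and "card F \<le> CARD('n)"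
  shows "\<exists>(e :: 'i \<Rightarrow> real^'n) \<mu>. orthonormal_on F e \<and> (\<forall>j\<in>F. A *v e j = \<mu> j *\<^sub>R e j)"
  using assms(2,3)
proof (induction F rule: finite_induct)
  case empty
  show ?case by (simp add: orthonormal_on_def)
next
  case (insert a F)
  have card_F: "card F < CARD('n)" using insert(1,2,4) by simp
  from insert.IH[OF less_imp_le[OF card_F]] obtain e \<mu>
    where e: "orthonormal_on F e" and eig: "\<And>j. j \<in> F \<Longrightarrow> A *v e j = \<mu> j *\<^sub>R e j"
    by blast
  define S where "S = {y. \<forall>x\<in>e ` F. orthogonal x y}"
  have S: "subspace S" unfolding S_def by (rule subspace_orthogonal_to_vectors)
  have inv: "A *v y \<in> S" if "y \<in> S" for y
  proof -
    have "e j \<bullet> (A *v y) = \<mu> j * (e j \<bullet> y)" if "j \<in> F" for j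
      using symmetric_mat_inner_commute[OF symA, of "e j" y] eig[OF that]
      by (simp add: inner_commute)
    with \<open>y \<in> S\<close> show ?thesis by (simp add: S_def orthogonal_def)
  qed
  have "dim (e ` F) \<le> card F"
    using dim_le_card'[of "e ` F"] card_image_le[of F e] insert(1) by simp
  also note card_F
  finally have "dim (e ` F) < DIM(real^'n)" by simp
  then obtain x0 where "x0 \<noteq> 0" and x0_orth: "\<And>y. y \<in> span (e ` F) \<Longrightarrow> orthogonal x0 y"
    using orthogonal_to_subspace_exists by blast
  moreover have "x0 \<in> S"
    unfolding S_def using x0_orth by (auto intro: span_base simp: orthogonal_commute[of x0])
  ultimately obtain h c where "h \<in> S" "norm h = 1" "A *v h = c *\<^sub>R h"
    using symmetric_mat_eigenvector_in_invariant_subspace[OF symA S inv] by blast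
  then have "orthonormal_on (insert a F) (e(a := h))"
    and "\<forall>j\<in>insert a F. A *v (e(a := h)) j = (\<mu>(a := c)) j *\<^sub>R (e(a := h)) j"
    using orthonormal_on_insert[OF e insert(2)] eig insert(2) by (auto simp: S_def)
  then show ?case by blast
qed

lemma symmetric_mat_orthonormal_eigenbasis:
  fixes A :: "real^'n^'n"
  assumes "symmetric_mat A"
  obtains e :: "'n \<Rightarrow> real^'n" and \<mu> where "orthonormal_on UNIV e" "\<And>j. A *v e j = \<mu> j *\<^sub>R e j"
  using symmetric_mat_orthonormal_eigenvectors[OF assms, of "UNIV :: 'n set"] by auto

lemma quadratic_form_eigenvector_expansion:
  fixes A :: "real^'n^'n"
  assumes "orthonormal_on J e" and "finite J" and "\<And>j. j \<in> J \<Longrightarrow> A *v e j = \<mu> j *\<^sub>R e j"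
    and "x \<in> span (e ` J)"
  shows "x \<bullet> (A *v x) = (\<Sum>j\<in>J. \<mu> j * (x \<bullet> e j)\<^sup>2)"
proof -
  have "A *v x = A *v (\<Sum>j\<in>J. (x \<bullet> e j) *\<^sub>R e j)"
    by (simp only: orthonormal_on_expansion[OF assms(1,2,4)])
  also have "\<dots> = (\<Sum>j\<in>J. (x \<bullet> e j * \<mu> j) *\<^sub>R e j)"
    using assms(3) by (simp add: linear_sum[OF matrix_vector_mul_linear] matrix_vector_mult_scaleR)
  finally show ?thesis by (simp add: inner_sum_right power2_eq_square mult_ac)
qed

lemma poly_charpoly: "poly (charpoly A) c = det (c *\<^sub>R mat 1 - (A::real^'n^'n))"
proof -
  have entry: "poly ((if i = j then [:0, 1:] else 0) - [:a:]) c = (if i = j then c else 0) - a"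
    for i j :: 'n and a
    by simp
  have "poly (charpoly A) c = det (\<chi> i j. (if i = j then c else 0) - A $ i $ j)"
    unfolding charpoly_def det_def
    by (simp only: poly_sum poly_mult poly_of_int poly_prod entry vec_lambda_beta)
  also have "(\<chi> i j. (if i = j then c else 0) - A $ i $ j) = c *\<^sub>R mat 1 - A"
    by (simp add: vec_eq_iff mat_def)
  finally show ?thesis .
qed

lemma det_orthonormal_eigenbasis:
  fixes A :: "real^'n^'n" and e :: "'n \<Rightarrow> real^'n"
  assumes e: "orthonormal_on UNIV e" and eig: "\<And>j. A *v e j = \<mu> j *\<^sub>R e j"
  shows "det A = (\<Prod>j\<in>UNIV. \<mu> j)"
proof -
  define Q :: "real^'n^'n" where "Q = (\<chi> i j. e j $ i)"
  define D :: "real^'n^'n" where "D = (\<chi> i j. if i = j then \<mu> j else 0)"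
  have "transpose Q ** Q = mat 1"
    using e unfolding orthonormal_on_def
    by (simp add: vec_eq_iff matrix_matrix_mult_def transpose_def Q_def inner_vec_def mat_def)
  then have "det Q \<noteq> 0"
    using det_orthogonal_matrix[of Q] by (auto simp: orthogonal_matrix)
  have "A ** Q = Q ** D"
  proof -
    have "(A ** Q) $ i $ j = (A *v e j) $ i" for i j
      by (simp add: matrix_matrix_mult_def matrix_vector_mult_def Q_def)
    moreover have "(Q ** D) $ i $ j = \<mu> j * e j $ i" for i j
      by (simp add: matrix_matrix_mult_def D_def Q_def if_distrib if_distribR mult.commute
          cong: if_cong)
    ultimately show ?thesis by (simp add: vec_eq_iff eig)
  qed
  then have "det A * det Q = det Q * det D" by (metis det_mul)
  with \<open>det Q \<noteq> 0\<close> show ?thesis by (simp add: det_diagonal D_def)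
qed

lemma charpoly_orthonormal_eigenbasis:
  fixes A :: "real^'n^'n" and e :: "'n \<Rightarrow> real^'n"
  assumes e: "orthonormal_on UNIV e" and eig: "\<And>j. A *v e j = \<mu> j *\<^sub>R e j"
  shows "charpoly A = (\<Prod>j\<in>UNIV. [:- \<mu> j, 1:])"
proof -
  have "poly (charpoly A) c = poly (\<Prod>j\<in>UNIV. [:- \<mu> j, 1:]) c" for c
  proof -
    have "(c *\<^sub>R mat 1 - A) *v e j = (c - \<mu> j) *\<^sub>R e j" for j
      by (simp add: eig matrix_vector_mult_diff_rdistrib scaleR_matrix_vector_assoc[symmetric]
          algebra_simps)
    then show ?thesis by (simp add: poly_charpoly det_orthonormal_eigenbasis[OF e] poly_prod)
  qed
  then show ?thesis by (intro poly_eq_poly_eq_iff[THEN iffD1] ext)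
qed

lemma is_eigenvalue_imp_charpoly_root:
  fixes A :: "real^'n^'n"
  assumes "is_eigenvalue A c"
  shows "poly (charpoly A) c = 0"
proof -
  obtain v where "v \<noteq> 0" "A *v v = c *\<^sub>R v" using assms unfolding is_eigenvalue_def by blast
  then have "(c *\<^sub>R mat 1 - A) *v v = 0"
    by (simp add: matrix_vector_mult_diff_rdistrib scaleR_matrix_vector_assoc[symmetric])
  with \<open>v \<noteq> 0\<close> have "\<not> invertible (c *\<^sub>R mat 1 - A)" by (auto simp: invertible_iff_ker_eq_0)
  then show ?thesis by (simp add: poly_charpoly invertible_det_nz)
qed

lemma symmetric_mat_finite_eigenvalues:
  fixes A :: "real^'n^'n"
  assumes "symmetric_mat A"
  shows "finite {c. is_eigenvalue A c}"
proof -
  obtain e :: "'n \<Rightarrow> real^'n" and \<mu> where "orthonormal_on UNIV e" "\<And>j. A *v e j = \<mu> j *\<^sub>R e j"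
    using symmetric_mat_orthonormal_eigenbasis[OF assms] by blast
  then have "charpoly A = (\<Prod>j\<in>UNIV. [:- \<mu> j, 1:])" by (rule charpoly_orthonormal_eigenbasis)
  then have "charpoly A \<noteq> 0" by simp
  then have "finite {c. poly (charpoly A) c = 0}" by (rule poly_roots_finite)
  then show ?thesis by (rule finite_subset[rotated]) (auto intro: is_eigenvalue_imp_charpoly_root)
qed

lemma Rayleigh_le_largest_eigenvalue:
  fixes A :: "real^'n^'n"
  assumes symA: "symmetric_mat A" and "norm x = 1"
  shows "x \<bullet> (A *v x) \<le> largest_eigenvalue A"
proof -
  have "x \<noteq> 0" using assms(2) by auto
  then obtain h where "norm h = 1" and max: "\<forall>y. y \<bullet> (A *v y) \<le> (h \<bullet> (A *v h)) * (norm y)\<^sup>2"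
    using Rayleigh_quotient_attains_max[where A=A, OF subspace_UNIV UNIV_I] by blast
  then have "A *v h = (h \<bullet> (A *v h)) *\<^sub>R h"
    by (intro symmetric_mat_Rayleigh_maximizer_eigenvector[OF symA subspace_UNIV]) auto
  with \<open>norm h = 1\<close> have "is_eigenvalue A (h \<bullet> (A *v h))"
    unfolding is_eigenvalue_def by (metis norm_zero zero_neq_one)
  then have "h \<bullet> (A *v h) \<le> largest_eigenvalue A"
    unfolding largest_eigenvalue_def by (simp add: symmetric_mat_finite_eigenvalues[OF symA])
  with max \<open>norm x = 1\<close> show ?thesis by (metis mult.right_neutral one_power2 order_trans)
qed

lemma Sup_Rayleigh_quotients:
  fixes A :: "real^'n^'n" and V :: "'k \<Rightarrow> (real^'n) set" and K :: "'k \<Rightarrow> bool"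
  assumes psd: "pos_semidef A" and V: "\<And>k. K k \<Longrightarrow> subspace (V k)"
    and nonempty: "K k0" "h0 \<in> V k0" "norm h0 = 1"
  defines "a \<equiv> Sup {h \<bullet> (A *v h) | h k. K k \<and> h \<in> V k \<and> norm h = 1}"
  shows "0 \<le> a" and "a \<le> largest_eigenvalue A"
    and "\<And>k w. K k \<Longrightarrow> w \<in> V k \<Longrightarrow> w \<bullet> (A *v w) \<le> a * (norm w)\<^sup>2"
proof -
  let ?Q = "{h \<bullet> (A *v h) | h k. K k \<and> h \<in> V k \<and> norm h = 1}"
  have le_largest: "q \<le> largest_eigenvalue A" if "q \<in> ?Q" for q
    using that Rayleigh_le_largest_eigenvalue psd unfolding pos_semidef_def by auto
  have "h0 \<bullet> (A *v h0) \<in> ?Q" using nonempty by blast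
  moreover have bdd: "bdd_above ?Q" using le_largest by (rule bdd_aboveI)
  ultimately show "0 \<le> a"
    unfolding a_def using psd cSup_upper unfolding pos_semidef_def by (meson order_trans)
  show "a \<le> largest_eigenvalue A"
    unfolding a_def using \<open>h0 \<bullet> (A *v h0) \<in> ?Q\<close> le_largest by (intro cSup_least) auto
  show "w \<bullet> (A *v w) \<le> a * (norm w)\<^sup>2" if "K k" "w \<in> V k" for k w
  proof (cases "w = 0")
    case False
    have "w /\<^sub>R norm w \<in> V k" using V[OF that(1)] that(2) by (simp add: subspace_scale)
    with False that(1) have "(w /\<^sub>R norm w) \<bullet> (A *v (w /\<^sub>R norm w)) \<in> ?Q" by fastforce
    then have "(w /\<^sub>R norm w) \<bullet> (A *v (w /\<^sub>R norm w)) \<le> a" unfolding a_def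
      by (rule cSup_upper[OF _ bdd])
    with False show ?thesis by (simp add: matrix_vector_mult_scaleR power2_eq_square field_simps)
  qed simp
qed

lemma order_prod_linear_factors:
  fixes x :: "'i \<Rightarrow> real"
  assumes "finite I"
  shows "order t (\<Prod>j\<in>I. [:- x j, 1:]) = count (image_mset x (mset_set I)) t"
  using assms
proof (induction I rule: finite_induct)
  case empty
  then show ?case by (simp add: order_0I)
next
  case (insert a I)
  have "(\<Prod>j\<in>I. [:- x j, 1:]) \<noteq> 0" by (simp add: insert(1))
  then have "order t ([:- x a, 1:] * (\<Prod>j\<in>I. [:- x j, 1:])) =
      order t [:- x a, 1:] + order t (\<Prod>j\<in>I. [:- x j, 1:])"
    by (intro order_mult)
      (simp only: mult_eq_0_iff de_Morgan_disj pCons_eq_0_iff one_neq_zero, simp)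
  moreover have "(\<Prod>j\<in>insert a I. [:- x j, 1:]) = [:- x a, 1:] * (\<Prod>j\<in>I. [:- x j, 1:])"
    using insert(1,2) by (rule prod.insert)
  moreover have "order t [:- x a, 1:] = (if x a = t then 1 else 0)"
    using order_power_n_n[of t 1] by (auto intro: order_0I)
  ultimately show ?case using insert by simp
qed

lemma card_filter_eq_if_prod_linear_factors_eq:
  fixes x :: "'i \<Rightarrow> real" and y :: "'j \<Rightarrow> real"
  assumes "finite I" and "finite J" and "(\<Prod>i\<in>I. [:- x i, 1:]) = (\<Prod>j\<in>J. [:- y j, 1:])"
  shows "card {i\<in>I. P (x i)} = card {j\<in>J. P (y j)}"
proof -
  have "image_mset x (mset_set I) = image_mset y (mset_set J)"
    using order_prod_linear_factors[OF assms(1)] order_prod_linear_factors[OF assms(2)] assms(3)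
    by (metis multiset_eqI)
  then have "size (filter_mset P (image_mset x (mset_set I))) =
      size (filter_mset P (image_mset y (mset_set J)))" by simp
  with assms(1,2) show ?thesis by (simp add: filter_mset_image_mset)
qed

lemma subspace_Int_exists_unit:
  fixes E W :: "'a::euclidean_space set"
  assumes "subspace E" and "subspace W" and "DIM('a) < dim E + dim W"
  shows "\<exists>h\<in>E \<inter> W. norm h = 1"
proof -
  have "dim {x + y |x y. x \<in> E \<and> y \<in> W} + dim (E \<inter> W) = dim E + dim W"
    by (rule dim_sums_Int[OF assms(1,2)])
  moreover have "dim {x + y |x y. x \<in> E \<and> y \<in> W} \<le> DIM('a)" by (rule dim_subset_UNIV)
  ultimately have "dim (E \<inter> W) \<noteq> 0" using assms(3) by linarith
  then have "\<not> E \<inter> W \<subseteq> {0}" by (simp add: dim_eq_0)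
  then obtain x where "x \<in> E \<inter> W" "x \<noteq> 0" by blast
  then have "x /\<^sub>R norm x \<in> E \<inter> W" and "norm (x /\<^sub>R norm x) = 1"
    using assms(1,2) by (auto simp: subspace_scale)
  then show ?thesis by blast
qed

text \<open>Counting eigenvalues with multiplicity through
  the characteristic polynomial, the eigenvectors for eigenvalues \<open>\<ge> \<sigma> i\<close> span a space of
  dimension at least \<open>i\<close>, which must meet \<open>W\<close>.\<close>

lemma eigenvalue_le_Rayleigh_on_subspace:
  fixes A :: "real^'n^'n" and \<sigma> :: "nat \<Rightarrow> real"
  assumes symA: "symmetric_mat A" and n: "n = CARD('n)"
    and charpoly: "charpoly A = (\<Prod>i=1..n. [:- \<sigma> i, 1:])"
    and decreasing: "\<And>i j. i \<in> {1..n} \<Longrightarrow> j \<in> {1..n} \<Longrightarrow> i \<le> j \<Longrightarrow> \<sigma> j \<le> \<sigma> i"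
    and i: "i \<in> {1..n}" and W: "subspace W" and dim_W: "n - i + 1 \<le> dim W"
  shows "\<exists>h\<in>W. norm h = 1 \<and> \<sigma> i \<le> h \<bullet> (A *v h)"
proof -
  obtain e :: "'n \<Rightarrow> real^'n" and \<mu>
    where e: "orthonormal_on UNIV e" and eig: "\<And>j. A *v e j = \<mu> j *\<^sub>R e j"
    using symmetric_mat_orthonormal_eigenbasis[OF symA] by blast
  define J where "J = {j\<in>UNIV. \<sigma> i \<le> \<mu> j}"
  have "card {j\<in>{1..n}. \<sigma> i \<le> \<sigma> j} = card J"
    unfolding J_def using charpoly charpoly_orthonormal_eigenbasis[OF e eig]
    by (intro card_filter_eq_if_prod_linear_factors_eq) auto
  moreover have "{1..i} \<subseteq> {j\<in>{1..n}. \<sigma> i \<le> \<sigma> j}" using decreasing i by auto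
  then have "i \<le> card {j\<in>{1..n}. \<sigma> i \<le> \<sigma> j}" using card_mono[of _ "{1..i}"] by fastforce
  ultimately have "dim (span (e ` J)) \<ge> i"
    using dim_span_orthonormal_on[OF orthonormal_on_subset[OF e]] by simp
  with dim_W i n have "DIM(real^'n) < dim (span (e ` J)) + dim W" by simp
  then obtain h where h: "h \<in> span (e ` J)" "h \<in> W" "norm h = 1"
    using subspace_Int_exists_unit[OF subspace_span W] by blast
  have "h \<bullet> (A *v h) = (\<Sum>j\<in>J. \<mu> j * (h \<bullet> e j)\<^sup>2)"
    by (rule quadratic_form_eigenvector_expansion[OF orthonormal_on_subset[OF e] _ eig h(1)]) auto
  also have "\<dots> \<ge> (\<Sum>j\<in>J. \<sigma> i * (h \<bullet> e j)\<^sup>2)"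
    unfolding J_def by (intro sum_mono mult_right_mono) auto
  moreover have "(\<Sum>j\<in>J. \<sigma> i * (h \<bullet> e j)\<^sup>2) = \<sigma> i"
    using norm_span_orthonormal_on[OF orthonormal_on_subset[OF e] _ h(1)] h(3)
    by (simp add: sum_distrib_left[symmetric])
  ultimately show ?thesis using h by auto
qed

section \<open>Singular value decomposition of the dynamics\<close>

lemma transpose_sum_outer_mult:
  "transpose (\<Sum>i\<in>I. c i *\<^sub>R outer (u i) (v i)) *v (h::real^'m) =
    (\<Sum>i\<in>I. (c i * (u i \<bullet> h)) *\<^sub>R (v i :: real^'n))"
proof -
  have "(transpose (\<Sum>i\<in>I. c i *\<^sub>R outer (u i) (v i)) *v h) $ j =
      (\<Sum>i\<in>I. (c i * (u i \<bullet> h)) *\<^sub>R v i) $ j" for j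
  proof -
    have "(transpose (\<Sum>i\<in>I. c i *\<^sub>R outer (u i) (v i)) *v h) $ j
        = (\<Sum>l\<in>UNIV. (\<Sum>i\<in>I. c i * (u i $ l * v i $ j)) * h $ l)"
      by (simp add: matrix_vector_mult_def transpose_def outer_def sum_component)
    also have "\<dots> = (\<Sum>i\<in>I. c i * (\<Sum>l\<in>UNIV. u i $ l * h $ l) * v i $ j)"
      by (simp add: sum_distrib_left sum_distrib_right sum.swap[of _ UNIV I] mult_ac)
    also have "\<dots> = (\<Sum>i\<in>I. (c i * (u i \<bullet> h)) *\<^sub>R v i) $ j"
      by (simp add: sum_component inner_vec_def)
    finally show ?thesis .
  qed
  then show ?thesis by (simp add: vec_eq_iff)
qed

context
  fixes u v :: "nat \<Rightarrow> real^'n" and lam :: "nat \<Rightarrow> real" and n m :: nat and K :: real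
    and Mk :: "real^'n^'n" and h :: "real^'n"
  assumes u: "orthonormal_on {1..n} u" and v: "orthonormal_on {1..n} v"
    and Mk: "Mk = (\<Sum>i=1..n. exp (lam i * K) *\<^sub>R outer (u i) (v i))"
    and m: "1 \<le> m" and h: "h \<in> span (u ` {m..n})"
begin

lemma transpose_svd_mult_span:
  "transpose Mk *v h = (\<Sum>i=m..n. (exp (lam i * K) * (u i \<bullet> h)) *\<^sub>R v i)"
proof -
  have "transpose Mk *v h = (\<Sum>i=1..n. (exp (lam i * K) * (u i \<bullet> h)) *\<^sub>R v i)"
    unfolding Mk by (rule transpose_sum_outer_mult)
  also have "\<dots> = (\<Sum>i=m..n. (exp (lam i * K) * (u i \<bullet> h)) *\<^sub>R v i)"
  proof (rule sum.mono_neutral_right)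
    show "\<forall>i\<in>{1..n} - {m..n}. (exp (lam i * K) * (u i \<bullet> h)) *\<^sub>R v i = 0"
      using inner_span_orthonormal_on_outside[OF u _ h] m by (auto simp: inner_commute)
  qed (use m in auto)
  finally show ?thesis .
qed

lemma transpose_svd_mult_in_span: "transpose Mk *v h \<in> span (v ` {m..n})"
  unfolding transpose_svd_mult_span by (intro span_sum span_mul span_base) auto

lemma norm_transpose_svd_mult_le:
  assumes decreasing: "\<And>i. i \<in> {m..n} \<Longrightarrow> lam i \<le> lam m" and "K \<ge> 0"
  shows "(norm (transpose Mk *v h))\<^sup>2 \<le> exp (2 * lam m * K) * (norm h)\<^sup>2"
proof -
  have sub: "{m..n} \<subseteq> {1..n}" using m by auto
  have "(norm (transpose Mk *v h))\<^sup>2 = (\<Sum>i=m..n. (exp (lam i * K) * (u i \<bullet> h))\<^sup>2)"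
    unfolding transpose_svd_mult_span
    by (rule norm_sum_orthonormal_on[OF orthonormal_on_subset[OF v sub]]) simp
  also have "\<dots> \<le> (\<Sum>i=m..n. exp (2 * lam m * K) * (h \<bullet> u i)\<^sup>2)"
  proof (rule sum_mono)
    fix i assume "i \<in> {m..n}"
    with decreasing \<open>K \<ge> 0\<close> have "lam i * K \<le> lam m * K" by (simp add: mult_right_mono)
    then have "(exp (lam i * K))\<^sup>2 \<le> exp (2 * lam m * K)"
      by (simp add: power2_eq_square exp_add[symmetric] mult.commute)
    then show "(exp (lam i * K) * (u i \<bullet> h))\<^sup>2 \<le> exp (2 * lam m * K) * (h \<bullet> u i)\<^sup>2"
      by (simp add: power_mult_distrib inner_commute mult_right_mono)
  qed
  also have "\<dots> = exp (2 * lam m * K) * (norm h)\<^sup>2"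
    using norm_span_orthonormal_on[OF orthonormal_on_subset[OF u sub] _ h]
    by (simp add: sum_distrib_left)
  finally show ?thesis .
qed

end

section \<open>The covariance bounds\<close>

lemma LIMSEQ_zero_if_exp_rate_bounded:
  fixes f l :: "nat \<Rightarrow> real"
  assumes l: "l \<longlonglongrightarrow> L" and L: "L < 0" and "a \<ge> 0"
    and bound: "\<forall>\<^sub>F k in sequentially. 0 \<le> f k \<and> f k \<le> a * exp (2 * l k * real k)"
  shows "f \<longlonglongrightarrow> 0"
proof (rule tendsto_sandwich[of "\<lambda>_. 0" f sequentially "\<lambda>k. a * exp L ^ k"])
  show "\<forall>\<^sub>F k in sequentially. 0 \<le> f k" using bound by (rule eventually_mono) auto
  have "\<forall>\<^sub>F k in sequentially. l k < L / 2" using order_tendstoD(2)[OF l, of "L / 2"] L by simp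
  with bound show "\<forall>\<^sub>F k in sequentially. f k \<le> a * exp L ^ k"
  proof eventually_elim
    case (elim k)
    then have "2 * l k * real k \<le> L * real k" by (intro mult_right_mono) auto
    then have "exp (2 * l k * real k) \<le> exp L ^ k"
      by (simp add: exp_of_nat_mult[symmetric] mult.commute)
    with elim \<open>a \<ge> 0\<close> show ?case by (meson mult_left_mono order_trans)
  qed
  have "(\<lambda>k. exp L ^ k) \<longlonglongrightarrow> 0" using L by (intro LIMSEQ_power_zero) simp
  then show "(\<lambda>k. a * exp L ^ k) \<longlonglongrightarrow> 0" by (simp add: tendsto_mult_right_zero)
qed simp

locale covariance_svd = covariance_recursion M \<Omega> P for M \<Omega> P :: "nat \<Rightarrow> real^'n^'n" +
  fixes u v :: "nat \<Rightarrow> nat \<Rightarrow> real^'n" and lam :: "nat \<Rightarrow> nat \<Rightarrow> real" and n :: nat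
  assumes n_def: "n = CARD('n)"
    and u_orthonormal: "\<And>k. k \<ge> 1 \<Longrightarrow> orthonormal_on {1..n} (u k)"
    and v_orthonormal: "\<And>k. k \<ge> 1 \<Longrightarrow> orthonormal_on {1..n} (v k)"
    and svd: "\<And>k. k \<ge> 1 \<Longrightarrow>
               Mprod M k = (\<Sum>i=1..n. exp (lam k i * real k) *\<^sub>R outer (u k i) (v k i))"
    and lam_decreasing: "\<And>k i j. k \<ge> 1 \<Longrightarrow> i \<in> {1..n} \<Longrightarrow> j \<in> {1..n} \<Longrightarrow> i \<le> j
                           \<Longrightarrow> lam k j \<le> lam k i"
begin

definition alpha :: "nat \<Rightarrow> real" where
  "alpha s = Sup {h \<bullet> (P 0 *v h) | h k. k \<ge> 1 \<and> h \<in> span (v k ` {n - s + 1..n}) \<and> norm h = 1}"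

lemma
  assumes "s \<in> {1..n}"
  shows alpha_nonneg: "0 \<le> alpha s"
    and alpha_le_largest_eigenvalue: "alpha s \<le> largest_eigenvalue (P 0)"
    and quadratic_form_P0_le_alpha:
      "\<And>k w. k \<ge> 1 \<Longrightarrow> w \<in> span (v k ` {n - s + 1..n}) \<Longrightarrow> w \<bullet> (P 0 *v w) \<le> alpha s * (norm w)\<^sup>2"
proof -
  have "v 1 n \<in> span (v 1 ` {n - s + 1..n})" and "norm (v 1 n) = 1"
    using assms orthonormal_on_norm[OF v_orthonormal] by (auto intro: span_base)
  note Sup_Rayleigh_quotients[where K = "\<lambda>k. k \<ge> 1" and V = "\<lambda>k. span (v k ` {n - s + 1..n})",
      OF P0_pos_semidef subspace_span order_refl this, folded alpha_def]
  then show "0 \<le> alpha s" "alpha s \<le> largest_eigenvalue (P 0)"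
    and "\<And>k w. k \<ge> 1 \<Longrightarrow> w \<in> span (v k ` {n - s + 1..n}) \<Longrightarrow> w \<bullet> (P 0 *v w) \<le> alpha s * (norm w)\<^sup>2"
    by auto
qed

lemma quadratic_form_P_le_alpha_exp:
  assumes k: "k \<ge> 1" and s: "s \<in> {1..n}"
    and h: "h \<in> span (u k ` {n - s + 1..n})" "norm h = 1"
  shows "h \<bullet> (P k *v h) \<le> alpha s * exp (2 * lam k (n - s + 1) * real k)"
proof -
  let ?w = "transpose (Mprod M k) *v h"
  note svd_k = u_orthonormal[OF k] v_orthonormal[OF k] svd[OF k] le_add2 h(1)
  have "h \<bullet> (P k *v h) \<le> ?w \<bullet> (P 0 *v ?w)" by (rule quadratic_form_P_le)
  also have "\<dots> \<le> alpha s * (norm ?w)\<^sup>2"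
    by (rule quadratic_form_P0_le_alpha[OF s k transpose_svd_mult_in_span[OF svd_k]])
  also have "\<dots> \<le> alpha s * exp (2 * lam k (n - s + 1) * real k)"
  proof (rule mult_left_mono[OF _ alpha_nonneg[OF s]])
    have "(norm ?w)\<^sup>2 \<le> exp (2 * lam k (n - s + 1) * real k) * (norm h)\<^sup>2"
      by (rule norm_transpose_svd_mult_le[OF svd_k]) (use lam_decreasing[OF k] s in auto)
    with h(2) show "(norm ?w)\<^sup>2 \<le> exp (2 * lam k (n - s + 1) * real k)" by simp
  qed
  finally show ?thesis .
qed

lemma eigenvalue_P_le_alpha_exp:
  assumes k: "k \<ge> 1" and charpoly: "charpoly (P k) = (\<Prod>i=1..n. [:- \<sigma> i, 1:])"
    and decreasing: "\<And>i j. i \<in> {1..n} \<Longrightarrow> j \<in> {1..n} \<Longrightarrow> i \<le> j \<Longrightarrow> \<sigma> j \<le> \<sigma> i"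
    and i: "i \<in> {1..n}"
  shows "\<sigma> i \<le> alpha (n - i + 1) * exp (2 * lam k i * real k)"
proof -
  have sym: "symmetric_mat (P k)" using P_pos_semidef unfolding pos_semidef_def by blast
  have i': "n - (n - i + 1) + 1 = i" "n - i + 1 \<in> {1..n}" using i by auto
  have "n - i + 1 \<le> dim (span (u k ` {i..n}))"
    using dim_span_orthonormal_on[OF orthonormal_on_subset[OF u_orthonormal[OF k]]] i
    by (simp add: Suc_diff_le)
  then obtain h where h: "h \<in> span (u k ` {i..n})" "norm h = 1" and \<sigma>_le: "\<sigma> i \<le> h \<bullet> (P k *v h)"
    using eigenvalue_le_Rayleigh_on_subspace[OF sym n_def charpoly decreasing i subspace_span]
    by blast
  have "h \<bullet> (P k *v h) \<le> alpha (n - i + 1) * exp (2 * lam k i * real k)"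
    using quadratic_form_P_le_alpha_exp[OF k i'(2) _ h(2)] h(1) unfolding i'(1) by blast
  with \<sigma>_le show ?thesis by linarith
qed

lemma quadratic_form_P_u_tendsto_0:
  assumes i: "i \<in> {1..n}" and lam: "(\<lambda>k. lam k i) \<longlonglongrightarrow> \<Lambda>" and "\<Lambda> < 0"
  shows "(\<lambda>k. u k i \<bullet> (P k *v u k i)) \<longlonglongrightarrow> 0"
proof (rule LIMSEQ_zero_if_exp_rate_bounded[OF lam \<open>\<Lambda> < 0\<close> alpha_nonneg])
  show "n - i + 1 \<in> {1..n}" using i by auto
  show "\<forall>\<^sub>F k in sequentially. 0 \<le> u k i \<bullet> (P k *v u k i) \<and>
          u k i \<bullet> (P k *v u k i) \<le> alpha (n - i + 1) * exp (2 * lam k i * real k)"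
    using eventually_ge_at_top[of 1]
  proof eventually_elim
    case (elim k)
    have i': "n - (n - i + 1) + 1 = i" "n - i + 1 \<in> {1..n}" using i by auto
    have "u k i \<in> span (u k ` {i..n})" using i by (auto intro: span_base)
    then have "u k i \<bullet> (P k *v u k i) \<le> alpha (n - i + 1) * exp (2 * lam k i * real k)"
      using quadratic_form_P_le_alpha_exp[OF elim i'(2) _
          orthonormal_on_norm[OF u_orthonormal[OF elim] i]]
      unfolding i'(1) by blast
    moreover have "0 \<le> u k i \<bullet> (P k *v u k i)"
      using P_pos_semidef unfolding pos_semidef_def by blast
    ultimately show ?case by blast
  qed
qed

lemma norm_P_u_tendsto_0:
  assumes "bounded (range P)" and "i \<in> {1..n}" and "(\<lambda>k. lam k i) \<longlonglongrightarrow> \<Lambda>" and "\<Lambda> < 0"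
  shows "(\<lambda>k. norm (P k *v u k i)) \<longlonglongrightarrow> 0"
proof -
  obtain B where B: "\<forall>x\<in>range P. norm x \<le> B" using assms(1) unfolding bounded_iff by blast
  define C where "C = real CARD('n) * real CARD('n) * B"
  have bound: "norm (P k *v x) \<le> C * norm x" for k x
  proof -
    have "norm (P k *v x) \<le> real CARD('n) * real CARD('n) * norm (P k) * norm x"
      by (rule norm_matrix_vector_mult_le)
    also have "\<dots> \<le> C * norm x"
      unfolding C_def using B by (intro mult_right_mono mult_left_mono) auto
    finally show ?thesis .
  qed
  have "(\<lambda>k. C * (u k i \<bullet> (P k *v u k i))) \<longlonglongrightarrow> C * 0"
    by (rule tendsto_mult_left[OF quadratic_form_P_u_tendsto_0[OF assms(2-4)]])
  from tendsto_real_sqrt[OF this]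
  have lim: "(\<lambda>k. sqrt (C * (u k i \<bullet> (P k *v u k i)))) \<longlonglongrightarrow> 0" by simp
  have upper: "norm (P k *v u k i) \<le> sqrt (C * (u k i \<bullet> (P k *v u k i)))" for k
    by (rule real_le_rsqrt[OF pos_semidef_norm_mult_le[OF P_pos_semidef bound]])
  show ?thesis
    by (rule tendsto_sandwich[OF always_eventually always_eventually tendsto_const lim])
      (simp_all add: upper)
qed

end

theorem mainTheorem5:
  fixes M :: "nat \<Rightarrow> real^'n^'n"
    and H :: "nat \<Rightarrow> real^'n^'d"
    and R :: "nat \<Rightarrow> real^'d^'d"
    and P :: "nat \<Rightarrow> real^'n^'n"
    and u v :: "nat \<Rightarrow> nat \<Rightarrow> real^'n"
    and lam :: "nat \<Rightarrow> nat \<Rightarrow> real"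
    and n :: nat
    and \<alpha> :: "nat \<Rightarrow> real"
  defines "n \<equiv> CARD('n)"
  defines "\<Omega> \<equiv> (\<lambda>k. transpose (H k) ** matrix_inv (R k) ** H k)"
  defines "\<alpha> \<equiv> (\<lambda>s. Sup {h \<bullet> (P 0 *v h) | h k. k \<ge> 1 \<and>
                    h \<in> span (v k ` {n - s + 1..n}) \<and> norm h = 1})"
  assumes M_inv: "\<And>k. k \<ge> 1 \<Longrightarrow> invertible (M k)"
    and R_pd: "\<And>k. pos_def (R k)"
    and P0_psd: "pos_semidef (P 0)"
    and P_rec: "\<And>k. P (Suc k) = M (Suc k) ** matrix_inv (mat 1 + P k ** \<Omega> k) ** P k
                                      ** transpose (M (Suc k))"
    and u_on: "\<And>k. k \<ge> 1 \<Longrightarrow> orthonormal_fam n (u k)"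
    and v_on: "\<And>k. k \<ge> 1 \<Longrightarrow> orthonormal_fam n (v k)"
    and svd: "\<And>k. k \<ge> 1 \<Longrightarrow>
               Mprod M k = (\<Sum>i=1..n. exp (lam k i * real k) *\<^sub>R outer (u k i) (v k i))"
    and lam_mono: "\<And>k i j. k \<ge> 1 \<Longrightarrow> i \<in> {1..n} \<Longrightarrow> j \<in> {1..n} \<Longrightarrow> i \<le> j
                     \<Longrightarrow> lam k j \<le> lam k i"
  shows
    "(\<forall>s\<in>{1..n}. \<alpha> s \<le> largest_eigenvalue (P 0))
     \<and> (\<forall>k\<ge>1. \<forall>s\<in>{1..n}. \<forall>h. h \<in> span (u k ` {n - s + 1..n}) \<and> norm h = 1 \<longrightarrow>
          h \<bullet> (P k *v h) \<le> \<alpha> s * exp (2 * lam k (n - s + 1) * real k))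
     \<and> (\<forall>k\<ge>1. \<forall>\<sigma> :: nat \<Rightarrow> real.
          charpoly (P k) = (\<Prod>i=1..n. [:- \<sigma> i, 1:])
          \<and> (\<forall>i\<in>{1..n}. \<forall>j\<in>{1..n}. i \<le> j \<longrightarrow> \<sigma> j \<le> \<sigma> i) \<longrightarrow>
          (\<forall>i\<in>{1..n}. \<sigma> i \<le> \<alpha> (n - i + 1) * exp (2 * lam k i * real k)
                       \<and> \<alpha> (n - i + 1) * exp (2 * lam k i * real k)
                           \<le> largest_eigenvalue (P 0) * exp (2 * lam k i * real k)))
     \<and> (\<forall>\<Lambda> :: nat \<Rightarrow> real.
          (\<forall>i\<in>{1..n}. (\<lambda>k. lam k i) \<longlonglongrightarrow> \<Lambda> i)
          \<and> (\<forall>i\<in>{1..n}. \<forall>j\<in>{1..n}. i < j \<longrightarrow> \<Lambda> j < \<Lambda> i) \<longrightarrow>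
          (\<forall>i\<in>{1..n}. \<Lambda> i < 0 \<longrightarrow> (\<lambda>k. u k i \<bullet> (P k *v u k i)) \<longlonglongrightarrow> 0)
          \<and> (bounded (range P) \<longrightarrow>
               (\<forall>i\<in>{1..n}. \<Lambda> i < 0 \<longrightarrow> (\<lambda>k. norm (P k *v u k i)) \<longlonglongrightarrow> 0)))"
proof -
  interpret covariance_svd M \<Omega> P u v lam n
  proof
    show "pos_semidef (\<Omega> k)" for k
      unfolding \<Omega>_def by (rule pos_semidef_information_matrix[OF R_pd])
  qed (use n_def P0_psd P_rec u_on v_on svd lam_mono in
      \<open>simp_all add: orthonormal_fam_iff_orthonormal_on\<close>)
  have "\<alpha> = alpha" unfolding \<alpha>_def alpha_def ..
  then show ?thesis
    using alpha_le_largest_eigenvalue quadratic_form_P_le_alpha_exp eigenvalue_P_le_alpha_exp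
      quadratic_form_P_u_tendsto_0 norm_P_u_tendsto_0
    by (auto intro: mult_right_mono)
qed

end
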